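(* With $D_1(y)=y(y+\lambda_2)(y+2\lambda_1+\lambda_2)$, the Laplace transform $\widehat{\boldsymbol\nu}_1$ (extended analytically to a neighbourhood of the closure of $\mathcal D_2$) satisfies $$\frac{\widehat{\boldsymbol\nu}_1(\overline y)}{D_1(\overline y)}=\frac{\widehat{\boldsymbol\nu}_1(y)}{D_1(y)}\qquad\text{for all }y\in\mathcal P_2.$$
   Context: Standing setting. Let $\delta_1<\delta_2<\delta_3$ be real numbers and set $\lambda_1:=2(\delta_2-\delta_1)>0$, $\lambda_2:=2(\delta_3-\delta_2)>0$. Let $(G(\cdot),H(\cdot))$ be the process of gaps of the degenerate rank-based three-particle system, i.e. the continuous process in $[0,\infty)^2$ solving $G(t)=G(0)-\tfrac{\lambda_1}{2}t-W(t)-\tfrac12L^H(t)+L^G(t)$, $H(t)=H(0)-\tfrac{\lambda_2}{2}t+W(t)-\tfrac12L^G(t)+L^H(t)$, $t\ge0$, where $W$ is a standard scalar Brownian motion and $L^Z(\cdot)=\int_0^\cdot\mathbf 1_{\{Z(t)=0\}}\,dZ(t)$ is the local time at $0$ of a continuous semimartingale $Z\ge0$. This process is positive recurrent with a unique invariant probability measure $\boldsymbol\pi$, which satisfies $\boldsymbol\pi((0,\infty)^2)=1$. Write $\widehat{\boldsymbol\pi}(x,y)=\iint_{(0,\infty)^2}e^{-xg-yh}\boldsymbol\pi(dg,dh)$. The lateral measures are $\boldsymbol\nu_1(A)=\mathbb E^{\boldsymbol\pi}\int_0^2\mathbf 1_A(H(t))\,dL^G(t)$ and $\boldsymbol\nu_2(A)=\mathbb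 E^{\boldsymbol\pi}\int_0^2\mathbf 1_A(G(t))\,dL^H(t)$ for Borel $A\subset(0,\infty)$, with Laplace transforms $\widehat{\boldsymbol\nu}_1(y)=\int_0^\infty e^{-yu}\boldsymbol\nu_1(du)=\lim_{x\to\infty}x\widehat{\boldsymbol\pi}(x,y)$ and $\widehat{\boldsymbol\nu}_2(x)=\lim_{y\to\infty}y\widehat{\boldsymbol\pi}(x,y)$. They satisfy the basic adjoint relationship (BAR) $$[(x-y)^2+\lambda_1x+\lambda_2y]\,\widehat{\boldsymbol\pi}(x,y)=\big(x-\tfrac y2\big)\widehat{\boldsymbol\nu}_1(y)+\big(y-\tfrac x2\big)\widehat{\boldsymbol\nu}_2(x),\qquad(x,y)\in[0,\infty)^2,$$ and conversely a probability measure on $(0,\infty)^2$ which, together with two finite measures on $(0,\infty)$, satisfies the BAR is the invariant measure. $\mathcal P_2:=\{y\in\mathbb C:(\Im y)^2=(\lambda_1+\lambda_2)\Re y+\frac14\lambda_2(2\lambda_1+\lambda_2)\}$ and $\mathcal D_2$ is the open domain inside it ($<$ instead of $=$); $\widehat{\boldsymbol\nu}_1$ extends analytically to an open set containing $\mathcal D_2\cup\mathcal P_2$. *)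

theory Defs
  imports "HOL-Probability.Probability" "HOL-Complex_Analysis.Complex_Analysis"
begin

definition laplace2 :: "(real \<times> real) measure \<Rightarrow> real \<Rightarrow> real \<Rightarrow> real" where
  "laplace2 \<pi> x y = (\<integral>p. exp (- x * fst p - y * snd p) \<partial>\<pi>)"

definition laplace1 :: "real measure \<Rightarrow> real \<Rightarrow> real" where
  "laplace1 \<nu> y = (\<integral>u. exp (- y * u) \<partial>\<nu>)"

definition claplace1 :: "real measure \<Rightarrow> complex \<Rightarrow> complex" where
  "claplace1 \<nu> y = (\<integral>u. exp (- y * complex_of_real u) \<partial>\<nu>)"

definition P2 :: "real \<Rightarrow> real \<Rightarrow> complex set" where
  "P2 l1 l2 = {y. (Im y)^2 = (l1 + l2) * Re y + l2 * (2 * l1 + l2) / 4}"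

definition D2 :: "real \<Rightarrow> real \<Rightarrow> complex set" where
  "D2 l1 l2 = {y. (Im y)^2 < (l1 + l2) * Re y + l2 * (2 * l1 + l2) / 4}"

definition Dpoly1 :: "real \<Rightarrow> real \<Rightarrow> complex \<Rightarrow> complex" where
  "Dpoly1 l1 l2 y = y * (y + of_real l2) * (y + of_real (2 * l1 + l2))"

end

theory Submission
  imports Defs
begin

text \<open>
  For real \<open>x\<close> the kernel \<open>(x - y)\<^sup>2 + l1 x + l2 y\<close> of the BAR, as a polynomial
  in \<open>y\<close>, has the conjugate roots \<open>y, cnj y\<close> on \<open>P2\<close> with \<open>Re y = x - l2 / 2\<close>.
  Continuing the BAR analytically in \<open>y\<close> and evaluating it at both roots kills the
  left-hand side and leaves two linear relations between the transform of \<open>\<nu>1\<close> at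
  \<open>y\<close> and \<open>cnj y\<close> and the common unknown transform of \<open>\<nu>2\<close> at \<open>x\<close>. Eliminating the
  unknown gives the claim, because \<open>D1\<close> is exactly the factor that makes
  \<open>D1 y (x - y / 2) (cnj y - x / 2)\<close> symmetric in the two roots. This settles the part
  of \<open>P2\<close> with \<open>Re y > 0\<close>. As the parametrization of \<open>P2\<close> by the imaginary part
  extends to the entire function \<open>w \<mapsto> (w\<^sup>2 - c) / (l1 + l2) + i w\<close>
  (with \<open>c = l2 (2 l1 + l2) / 4\<close>), the identity reaches all of \<open>P2\<close> by analytic
  continuation along the real \<open>w\<close>-axis.
\<close>

lemma mult_exp_neg_le:
  fixes c U :: real
  assumes "0 < c" "0 \<le> U"
  shows "U * exp (- (c * U)) \<le> 1 / c"
proof -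
  have "c * U \<le> exp (c * U)"
    using exp_ge_add_one_self[of "c * U"] by linarith
  then show ?thesis
    using assms by (simp add: exp_minus field_simps)
qed

lemma power2_mult_exp_neg_le:
  fixes c U :: real
  assumes "0 < c" "0 \<le> U"
  shows "U\<^sup>2 * exp (- (c * U / 2)) \<le> 16 / c\<^sup>2"
proof -
  have "U\<^sup>2 * exp (- (c * U / 2)) = (U * exp (- (c / 4 * U)))\<^sup>2"
    by (simp add: power2_eq_square exp_add[symmetric])
  also have "\<dots> \<le> (1 / (c / 4))\<^sup>2"
    using mult_exp_neg_le[of "c / 4" U] assms by (intro power_mono) auto
  finally show ?thesis
    by (simp add: power_divide)
qed

lemma norm_exp_neg_mult_remainder_le:
  fixes y h :: complex and U :: real
  assumes y: "0 < Re y" and h: "norm h \<le> Re y / 2" and U: "0 \<le> U"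
  shows "norm (exp (- (y + h) * U) - exp (- y * U) + h * U * exp (- y * U))
           \<le> 16 / (Re y)\<^sup>2 * (norm h)\<^sup>2"
proof -
  define z where "z = - h * U"
  have eq: "exp (- (y + h) * U) - exp (- y * U) + h * U * exp (- y * U)
              = exp (- y * U) * (exp z - 1 - z)"
    by (simp add: z_def algebra_simps flip: exp_add)
  have "norm (exp z - 1 - z) \<le> exp \<bar>Re z\<bar> * (norm z)\<^sup>2"
    using Taylor_exp[of z 1] by (simp add: eval_nat_numeral algebra_simps)
  also have "\<bar>Re z\<bar> \<le> Re y / 2 * U"
  proof -
    have "norm z = norm h * U"
      using U by (simp add: z_def norm_mult)
    also have "\<dots> \<le> Re y / 2 * U"
      using h U by (rule mult_right_mono)
    finally show ?thesis
      using abs_Re_le_cmod[of z] by linarith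
  qed
  then have "exp \<bar>Re z\<bar> * (norm z)\<^sup>2 \<le> exp (Re y / 2 * U) * (norm z)\<^sup>2"
    by (intro mult_right_mono) auto
  finally have "norm (exp (- (y + h) * U) - exp (- y * U) + h * U * exp (- y * U))
                  \<le> exp (- (Re y * U)) * (exp (Re y / 2 * U) * (norm z)\<^sup>2)"
    unfolding eq norm_mult by (simp add: mult_left_mono)
  also have "\<dots> = (norm h)\<^sup>2 * (U\<^sup>2 * exp (- (Re y * U / 2)))"
    using U by (simp add: z_def norm_mult power_mult_distrib mult_ac flip: exp_add)
  also have "\<dots> \<le> (norm h)\<^sup>2 * (16 / (Re y)\<^sup>2)"
    using power2_mult_exp_neg_le[OF y U] by (intro mult_left_mono) auto
  finally show ?thesis
    by (simp add: mult.commute)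
qed

lemma norm_integral_le_const:
  fixes g :: "'a \<Rightarrow> complex"
  assumes "finite_measure M" "g \<in> borel_measurable M" "AE p in M. norm (g p) \<le> B"
  shows "norm (\<integral>p. g p \<partial>M) \<le> B * measure M (space M)"
proof -
  interpret finite_measure M by fact
  have "norm (\<integral>p. g p \<partial>M) \<le> (\<integral>p. norm (g p) \<partial>M)"
    by (rule integral_norm_bound)
  also have "\<dots> \<le> (\<integral>p. B \<partial>M)"
    using assms
    by (intro integral_mono_AE integrable_norm integrable_const integrable_const_bound[where B = B]) auto
  finally show ?thesis
    by (simp add: mult.commute)
qed

context
  fixes M :: "'a measure" and a :: "'a \<Rightarrow> complex" and u :: "'a \<Rightarrow> real"
  assumes M: "finite_measure M"
    and a_meas [measurable]: "a \<in> borel_measurable M" and u_meas [measurable]: "u \<in> borel_measurable M"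
    and a_bound: "AE p in M. norm (a p) \<le> 1" and u_nonneg: "AE p in M. 0 \<le> u p"
begin

lemma laplace_integrable:
  fixes y :: complex
  assumes "0 \<le> Re y"
  shows "integrable M (\<lambda>p. a p * exp (- y * of_real (u p)))"
proof (rule finite_measure.integrable_const_bound[OF M, where B = 1])
  show "AE p in M. norm (a p * exp (- y * of_real (u p))) \<le> 1"
    using a_bound u_nonneg
  proof eventually_elim
    case (elim p)
    then have "exp (- (Re y * u p)) \<le> 1"
      using assms by simp
    with elim show ?case
      by (simp add: norm_mult mult_le_one)
  qed
qed measurable

lemma laplace_derivative_integrable:
  fixes y :: complex
  assumes y: "0 < Re y"
  shows "integrable M (\<lambda>p. a p * (- of_real (u p)) * exp (- y * of_real (u p)))"
proof (rule finite_measure.integrable_const_bound[OF M, where B = "1 / Re y"])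
  show "AE p in M. norm (a p * (- of_real (u p)) * exp (- y * of_real (u p))) \<le> 1 / Re y"
    using a_bound u_nonneg
  proof eventually_elim
    case (elim p)
    have "norm (a p * (- of_real (u p)) * exp (- y * of_real (u p)))
            = norm (a p) * (u p * exp (- (Re y * u p)))"
      using elim by (simp add: norm_mult)
    also have "\<dots> \<le> 1 * (1 / Re y)"
      using elim mult_exp_neg_le[OF y elim(2)] by (intro mult_mono) auto
    finally show ?case
      by simp
  qed
qed measurable

lemma laplace_remainder_le:
  fixes y h :: complex
  assumes y: "0 < Re y" and h: "norm h \<le> Re y / 2"
  shows "norm ((\<integral>p. a p * exp (- (y + h) * of_real (u p)) \<partial>M)
              - (\<integral>p. a p * exp (- y * of_real (u p)) \<partial>M)
              - h * (\<integral>p. a p * (- of_real (u p)) * exp (- y * of_real (u p)) \<partial>M))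
           \<le> 16 / (Re y)\<^sup>2 * (norm h)\<^sup>2 * measure M (space M)"
proof -
  let ?R = "\<lambda>p. exp (- (y + h) * of_real (u p)) - exp (- y * of_real (u p))
                + h * of_real (u p) * exp (- y * of_real (u p))"
  have "0 \<le> Re (y + h)"
    using h abs_Re_le_cmod[of h] y by auto
  then have "(\<integral>p. a p * exp (- (y + h) * of_real (u p)) \<partial>M)
               - (\<integral>p. a p * exp (- y * of_real (u p)) \<partial>M)
               - h * (\<integral>p. a p * (- of_real (u p)) * exp (- y * of_real (u p)) \<partial>M)
             = (\<integral>p. a p * ?R p \<partial>M)"
    using laplace_integrable[of "y + h"] laplace_integrable[of y] laplace_derivative_integrable[OF y] y
    by (simp add: integral_diff algebra_simps)
  also have "norm \<dots> \<le> 16 / (Re y)\<^sup>2 * (norm h)\<^sup>2 * measure M (space M)"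
  proof (rule norm_integral_le_const[OF M])
    show "AE p in M. norm (a p * ?R p) \<le> 16 / (Re y)\<^sup>2 * (norm h)\<^sup>2"
      using a_bound u_nonneg
    proof eventually_elim
      case (elim p)
      with norm_exp_neg_mult_remainder_le[OF y h elim(2)] show ?case
        unfolding norm_mult by (meson mult_left_le_one_le norm_ge_zero order_trans)
    qed
  qed measurable
  finally show ?thesis .
qed

lemma laplace_has_field_derivative:
  fixes y :: complex
  assumes y: "0 < Re y"
  shows "((\<lambda>y. \<integral>p. a p * exp (- y * of_real (u p)) \<partial>M)
           has_field_derivative (\<integral>p. a p * (- of_real (u p)) * exp (- y * of_real (u p)) \<partial>M)) (at y)"
proof -
  define F where "F = (\<lambda>y. \<integral>p. a p * exp (- y * of_real (u p)) \<partial>M)"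
  define F' where "F' = (\<integral>p. a p * (- of_real (u p)) * exp (- y * of_real (u p)) \<partial>M)"
  define K where "K = 16 / (Re y)\<^sup>2 * measure M (space M)"
  have quotient_bound: "norm ((F (y + h) - F y) / h - F') \<le> norm h * K"
    if h: "h \<noteq> 0" "norm h \<le> Re y / 2" for h
  proof -
    have "norm (F (y + h) - F y - h * F') \<le> 16 / (Re y)\<^sup>2 * (norm h)\<^sup>2 * measure M (space M)"
      unfolding F_def F'_def by (rule laplace_remainder_le[OF y h(2)])
    also have "\<dots> = (norm h)\<^sup>2 * K"
      by (simp add: K_def)
    finally have "norm (F (y + h) - F y - h * F') \<le> (norm h)\<^sup>2 * K" .
    moreover have "(F (y + h) - F y) / h - F' = (F (y + h) - F y - h * F') / h"
      using h by (simp add: field_simps)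
    ultimately show ?thesis
      using h by (simp add: norm_divide divide_le_eq power2_eq_square mult_ac)
  qed
  have "((\<lambda>h. (F (y + h) - F y) / h - F') \<longlongrightarrow> 0) (at 0)"
  proof (rule Lim_null_comparison)
    show "\<forall>\<^sub>F h in at 0. norm ((F (y + h) - F y) / h - F') \<le> norm h * K"
      unfolding eventually_at using y
      by (intro exI[of _ "Re y / 2"]) (auto intro!: quotient_bound)
    show "((\<lambda>h. norm h * K) \<longlongrightarrow> 0) (at (0 :: complex))"
      by (auto intro!: tendsto_eq_intros)
  qed
  then show ?thesis
    unfolding F_def[symmetric] F'_def[symmetric] DERIV_def by (rule LIM_zero_cancel)
qed

lemma laplace_holomorphic:
  "(\<lambda>y. \<integral>p. a p * exp (- y * of_real (u p)) \<partial>M) holomorphic_on {y. 0 < Re y}"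
  using laplace_has_field_derivative
  by (subst holomorphic_on_open) (auto simp: open_halfspace_Re_gt)

end

definition claplace2 :: "(real \<times> real) measure \<Rightarrow> real \<Rightarrow> complex \<Rightarrow> complex" where
  "claplace2 \<pi> x y = (\<integral>p. exp (- of_real (x * fst p)) * exp (- y * of_real (snd p)) \<partial>\<pi>)"

lemma claplace1_of_real: "claplace1 \<nu> (of_real t) = of_real (laplace1 \<nu> t)"
  unfolding claplace1_def laplace1_def
  by (simp flip: integral_complex_of_real exp_of_real)

lemma claplace2_of_real: "claplace2 \<pi> x (of_real t) = of_real (laplace2 \<pi> x t)"
  unfolding claplace2_def laplace2_def
  by (simp flip: integral_complex_of_real exp_of_real exp_add)

lemma claplace1_holomorphic:
  assumes "finite_measure \<nu>" "sets \<nu> = sets borel" "AE u in \<nu>. 0 \<le> u"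
  shows "claplace1 \<nu> holomorphic_on {y. 0 < Re y}"
proof -
  have "(\<lambda>y. \<integral>u. 1 * exp (- y * of_real u) \<partial>\<nu>) holomorphic_on {y. 0 < Re y}"
    using assms by (intro laplace_holomorphic) (auto simp: measurable_cong_sets[OF assms(2) refl])
  then show ?thesis
    by (simp add: claplace1_def[abs_def])
qed

lemma claplace2_holomorphic:
  assumes "finite_measure \<pi>" "sets \<pi> = sets borel" "AE p in \<pi>. 0 \<le> fst p \<and> 0 \<le> snd p"
    and "0 \<le> x"
  shows "claplace2 \<pi> x holomorphic_on {y. 0 < Re y}"
  unfolding claplace2_def
proof (rule laplace_holomorphic)
  show "(\<lambda>p. exp (- complex_of_real (x * fst p))) \<in> borel_measurable \<pi>" "snd \<in> borel_measurable \<pi>"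
    unfolding measurable_cong_sets[OF assms(2) refl]
    by (intro borel_measurable_continuous_onI continuous_intros)+
  show "AE p in \<pi>. norm (exp (- complex_of_real (x * fst p))) \<le> 1"
    using assms(3) by eventually_elim (use assms(4) in auto)
qed (use assms in auto)

lemma islimpt_of_real_Ioi:
  fixes a b :: real
  assumes "a < b"
  shows "of_real b islimpt (of_real ` {a<..} :: complex set)"
proof (rule connected_imp_perfect)
  show "connected (of_real ` {a<..} :: complex set)"
    by (intro connected_continuous_image continuous_intros) auto
  show "of_real ` {a<..} \<noteq> {z}" for z :: complex
  proof
    assume singleton: "of_real ` {a<..} = {z}"
    have "(of_real b :: complex) \<in> of_real ` {a<..}" "(of_real (b + 1) :: complex) \<in> of_real ` {a<..}"
      using assms by (intro imageI; simp)+
    with singleton show False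
      by simp
  qed
qed (use assms in auto)

lemma eq_of_eventually_eq_at_right:
  fixes f g :: "complex \<Rightarrow> complex"
  assumes f: "isCont f y" and g: "isCont g y"
    and eq: "\<forall>\<^sub>F t in at_right 0. f (y + of_real t) = g (y + of_real t)"
  shows "f y = g y"
proof -
  have lim: "((\<lambda>t. y + of_real t) \<longlongrightarrow> y) (at_right (0 :: real))"
    by (auto intro!: tendsto_eq_intros)
  have "((\<lambda>t. f (y + of_real t)) \<longlongrightarrow> f y) (at_right 0)"
    using isCont_tendsto_compose[OF f lim] .
  moreover have "((\<lambda>t. f (y + of_real t)) \<longlongrightarrow> g y) (at_right 0)"
    using isCont_tendsto_compose[OF g lim] tendsto_cong[OF eq] by simp
  ultimately show ?thesis
    by (rule tendsto_unique[OF trivial_limit_at_right_real])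
qed

lemma holomorphic_zero_on_reals_if_zero_on_ray:
  assumes G: "G holomorphic_on V" and V: "open V" "range of_real \<subseteq> V"
    and zero: "\<And>s. b < s \<Longrightarrow> G (of_real s) = 0"
  shows "G (of_real s) = 0"
proof -
  define C where "C = connected_component_set V 0"
  have reals_in_C: "range of_real \<subseteq> C"
    unfolding C_def
  proof (rule connected_component_maximal)
    show "connected (range (of_real :: real \<Rightarrow> complex))"
      by (intro connected_continuous_image continuous_intros) auto
  qed (use V in \<open>auto intro: range_eqI[of _ _ 0]\<close>)
  show ?thesis
  proof (rule analytic_continuation[where f = G and S = C and U = "of_real ` {b<..}"
        and \<xi> = "of_real (b + 1)"])
    show "G holomorphic_on C"
      using G by (rule holomorphic_on_subset) (simp add: C_def connected_component_subset)
    show "open C"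
      using V by (simp add: C_def open_connected_component)
    show "of_real (b + 1) islimpt (of_real ` {b<..} :: complex set)"
      by (rule islimpt_of_real_Ioi) simp
    show "of_real (b + 1) \<in> C" "of_real ` {b<..} \<subseteq> C" "of_real s \<in> C"
      using reals_in_C by blast+
  qed (use zero in \<open>auto simp: C_def\<close>)
qed

lemma cnj_in_P2: "y \<in> P2 l1 l2 \<Longrightarrow> cnj y \<in> P2 l1 l2"
  by (simp add: P2_def)

lemma P2_shift_right_in_D2:
  assumes "y \<in> P2 l1 l2" "0 < l1 + l2" "0 < t"
  shows "y + of_real t \<in> D2 l1 l2"
  using assms by (simp add: P2_def D2_def distrib_left)

lemma eq_on_P2_if_eq_on_D2:
  fixes f g :: "complex \<Rightarrow> complex"
  assumes "0 < l1 + l2" and S: "open S" "P2 l1 l2 \<subseteq> S"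
    and f: "f holomorphic_on S" and g: "g holomorphic_on {y. 0 < Re y}"
    and eq: "\<And>y. y \<in> D2 l1 l2 \<Longrightarrow> 0 < Re y \<Longrightarrow> f y = g y"
    and y: "y \<in> P2 l1 l2" "0 < Re y"
  shows "f y = g y"
proof (rule eq_of_eventually_eq_at_right[where f = f and g = g])
  have "y \<in> S"
    using S(2) y(1) by blast
  then show "isCont f y"
    using holomorphic_on_imp_continuous_on[OF f] S(1) by (simp add: continuous_on_eq_continuous_at)
  show "isCont g y"
    using holomorphic_on_imp_continuous_on[OF g] y(2)
    by (simp add: continuous_on_eq_continuous_at open_halfspace_Re_gt)
  show "\<forall>\<^sub>F t in at_right 0. f (y + of_real t) = g (y + of_real t)"
  proof (rule eventually_at_rightI[of 0 1])
    show "f (y + of_real t) = g (y + of_real t)" if "t \<in> {0<..<1}" for t :: real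
      using that y assms(1) by (intro eq P2_shift_right_in_D2) auto
  qed simp
qed

lemma P2_cnj_sum_prod:
  fixes l1 l2 x :: real
  assumes y: "y \<in> P2 l1 l2" and x: "x = Re y + l2 / 2"
  shows "y + cnj y = 2 * of_real x - of_real l2"
    and "y * cnj y = (of_real x)\<^sup>2 + of_real l1 * of_real x"
proof -
  show "y + cnj y = 2 * of_real x - of_real l2"
    by (simp add: x complex_add_cnj)
  have "(Im y)\<^sup>2 = (l1 + l2) * Re y + l2 * (2 * l1 + l2) / 4"
    using y by (simp add: P2_def)
  then have "(Re y)\<^sup>2 + (Im y)\<^sup>2 = x\<^sup>2 + l1 * x"
    by (simp add: x power2_eq_square algebra_simps)
  then show "y * cnj y = (of_real x)\<^sup>2 + of_real l1 * of_real x"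
    by (simp add: complex_mult_cnj flip: of_real_power of_real_mult of_real_add)
qed

lemma Dpoly1_kernel_roots:
  fixes l1 l2 :: real and X Y Z :: complex
  assumes "Y + Z = 2 * X - of_real l2" "Y * Z = X\<^sup>2 + of_real l1 * X"
  shows "Dpoly1 l1 l2 Y * (X - Y / 2) * (Z - X / 2) = Dpoly1 l1 l2 Z * (X - Z / 2) * (Y - X / 2)"
  using assms unfolding Dpoly1_def of_real_add of_real_mult of_real_numeral by algebra

lemma Dpoly1_nonzero_on_P2:
  assumes l1: "0 < l1" and l2: "0 < l2" and y: "y \<in> P2 l1 l2"
  shows "Dpoly1 l1 l2 y \<noteq> 0"
proof
  assume "Dpoly1 l1 l2 y = 0"
  then consider "y = 0" | "y = - of_real l2" | "y = - of_real (2 * l1 + l2)"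
    unfolding Dpoly1_def mult_eq_0_iff add_eq_0_iff2 by blast
  moreover have P: "(Im y)\<^sup>2 = (l1 + l2) * Re y + l2 * (2 * l1 + l2) / 4"
    using y by (simp add: P2_def)
  ultimately show False
  proof cases
    case 1
    with P l1 l2 show False
      by simp
  next
    case 2
    with P have "l2 * (2 * l1 + 3 * l2) = 0"
      by (simp add: algebra_simps)
    with l1 l2 show False
      by simp
  next
    case 3
    with P have "(2 * l1 + l2) * (4 * l1 + 3 * l2) = 0"
      by (simp add: algebra_simps)
    with l1 l2 show False
      by (simp add: add_pos_pos)
  qed
qed

definition P2_param :: "real \<Rightarrow> real \<Rightarrow> complex \<Rightarrow> complex" where
  "P2_param l1 l2 w = (w\<^sup>2 - of_real (l2 * (2 * l1 + l2) / 4)) / of_real (l1 + l2) + \<i> * w"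

lemma P2_param_of_real:
  "P2_param l1 l2 (of_real s) = Complex ((s\<^sup>2 - l2 * (2 * l1 + l2) / 4) / (l1 + l2)) s"
  by (simp add: P2_param_def complex_eq_iff flip: of_real_power of_real_diff of_real_divide)

lemma P2_param_of_real_in_P2: "0 < l1 + l2 \<Longrightarrow> P2_param l1 l2 (of_real s) \<in> P2 l1 l2"
  by (simp add: P2_param_of_real P2_def)

lemma P2_param_uminus: "P2_param l1 l2 (- of_real s) = cnj (P2_param l1 l2 (of_real s))"
  by (simp add: P2_param_def complex_eq_iff flip: of_real_power of_real_diff of_real_divide)

lemma P2_param_Im: "y \<in> P2 l1 l2 \<Longrightarrow> 0 < l1 + l2 \<Longrightarrow> P2_param l1 l2 (of_real (Im y)) = y"
  by (simp add: P2_param_of_real P2_def complex_eq_iff)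

lemma P2_param_holomorphic [holomorphic_intros]:
  "0 < l1 + l2 \<Longrightarrow> f holomorphic_on A \<Longrightarrow> (\<lambda>w. P2_param l1 l2 (f w)) holomorphic_on A"
  unfolding P2_param_def by (intro holomorphic_intros) auto

lemma P2_cnj_symmetry_continuation:
  fixes \<phi> \<psi> :: "complex \<Rightarrow> complex"
  assumes l1: "0 < l1" and l2: "0 < l2"
    and S: "open S" "P2 l1 l2 \<subseteq> S" and \<phi>: "\<phi> holomorphic_on S" and \<psi>: "\<psi> holomorphic_on S"
    and sym: "\<And>y. y \<in> P2 l1 l2 \<Longrightarrow> 0 < Re y \<Longrightarrow> \<phi> (cnj y) * \<psi> y = \<phi> y * \<psi> (cnj y)"
    and y: "y \<in> P2 l1 l2"
  shows "\<phi> (cnj y) * \<psi> y = \<phi> y * \<psi> (cnj y)"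
proof -
  have a: "0 < l1 + l2"
    using l1 l2 by simp
  let ?Y = "P2_param l1 l2" and ?c = "l2 * (2 * l1 + l2) / 4"
  define G where "G = (\<lambda>w. \<phi> (?Y (- w)) * \<psi> (?Y w) - \<phi> (?Y w) * \<psi> (?Y (- w)))"
  define V where "V = ?Y -` S \<inter> (\<lambda>w. ?Y (- w)) -` S"
  have "G (of_real (Im y)) = 0"
  proof (rule holomorphic_zero_on_reals_if_zero_on_ray[where V = V and b = "sqrt ?c"])
    have Y_hol: "?Y holomorphic_on A" and Y_minus_hol: "(\<lambda>w. ?Y (- w)) holomorphic_on A" for A
      using a by (auto intro!: holomorphic_intros)
    have "(h \<circ> ?Y) holomorphic_on V" "(h \<circ> (\<lambda>w. ?Y (- w))) holomorphic_on V"
      if "h holomorphic_on S" for h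
      by (rule holomorphic_on_compose_gen[OF _ that], (auto simp: V_def Y_hol Y_minus_hol))+
    then show "G holomorphic_on V"
      unfolding G_def o_def using \<phi> \<psi> by (intro holomorphic_intros)
    have "continuous_on UNIV ?Y" "continuous_on UNIV (\<lambda>w. ?Y (- w))"
      by (intro holomorphic_on_imp_continuous_on Y_hol Y_minus_hol)+
    then show "open V"
      unfolding V_def using S by (intro open_Int open_vimage)
    show "range of_real \<subseteq> V"
      using P2_param_of_real_in_P2[OF a] cnj_in_P2 S by (auto simp: V_def P2_param_uminus subsetD)
    show "G (of_real s) = 0" if "sqrt ?c < s" for s
    proof -
      have "?c < s\<^sup>2"
        using power_strict_mono[OF that real_sqrt_ge_zero, of 2] l1 l2 by simp
      then have "0 < Re (?Y (of_real s))"
        using a by (simp add: P2_param_of_real)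
      then show ?thesis
        using sym[OF P2_param_of_real_in_P2[OF a]] by (simp add: G_def P2_param_uminus)
    qed
  qed
  then show ?thesis
    using P2_param_uminus[of l1 l2 "Im y"] by (simp add: G_def P2_param_Im[OF y a])
qed

lemma AE_nonneg_if_emeasure_nonpos_zero:
  fixes \<nu> :: "real measure"
  assumes "sets \<nu> = sets borel" "emeasure \<nu> {..0} = 0"
  shows "AE u in \<nu>. 0 \<le> u"
proof -
  have "AE u in \<nu>. u \<notin> {..0}"
    using assms by (intro AE_I'[of "{..0}"] null_setsI) auto
  then show ?thesis
    by eventually_elim auto
qed

lemma AE_quadrant_if_emeasure_open_quadrant_one:
  fixes \<pi> :: "(real \<times> real) measure"
  assumes "prob_space \<pi>" "emeasure \<pi> ({0<..} \<times> {0<..}) = 1"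
  shows "AE p in \<pi>. 0 \<le> fst p \<and> 0 \<le> snd p"
proof -
  have "AE p in \<pi>. p \<in> {0<..} \<times> {0<..}"
    using assms by (intro prob_space.AE_prob_1) (simp_all add: measure_def)
  then show ?thesis
    by eventually_elim auto
qed

locale basic_adjoint_relationship =
  fixes l1 l2 :: real and \<pi> :: "(real \<times> real) measure" and \<nu>1 \<nu>2 :: "real measure"
  assumes pi_finite: "finite_measure \<pi>" and pi_sets: "sets \<pi> = sets borel"
    and pi_nonneg: "AE p in \<pi>. 0 \<le> fst p \<and> 0 \<le> snd p"
    and nu1_finite: "finite_measure \<nu>1" and nu1_sets: "sets \<nu>1 = sets borel"
    and nu1_nonneg: "AE u in \<nu>1. 0 \<le> u"
    and BAR: "\<And>x y. 0 \<le> x \<Longrightarrow> 0 \<le> y \<Longrightarrow>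
       ((x - y)\<^sup>2 + l1 * x + l2 * y) * laplace2 \<pi> x y
         = (x - y / 2) * laplace1 \<nu>1 y + (y - x / 2) * laplace1 \<nu>2 x"
begin

lemma BAR_complex:
  assumes x: "0 \<le> x" and y: "0 < Re y"
  shows "((of_real x - y)\<^sup>2 + of_real l1 * of_real x + of_real l2 * y) * claplace2 \<pi> x y
           = (of_real x - y / 2) * claplace1 \<nu>1 y + (y - of_real x / 2) * of_real (laplace1 \<nu>2 x)"
    (is "?lhs y = ?rhs y")
proof -
  have "?lhs y - ?rhs y = 0"
  proof (rule analytic_continuation[where f = "\<lambda>y. ?lhs y - ?rhs y" and S = "{y. 0 < Re y}"
        and U = "of_real ` {0<..}" and \<xi> = 1])
    show "(\<lambda>y. ?lhs y - ?rhs y) holomorphic_on {y. 0 < Re y}"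
      using claplace1_holomorphic[OF nu1_finite nu1_sets nu1_nonneg]
        claplace2_holomorphic[OF pi_finite pi_sets pi_nonneg x]
      by (intro holomorphic_intros) auto
    show "1 islimpt (of_real ` {0<..} :: complex set)"
      using islimpt_of_real_Ioi[of 0 1] by simp
    show "?lhs z - ?rhs z = 0" if z: "z \<in> of_real ` {0<..}" for z
    proof -
      obtain t where t: "0 < t" "z = of_real t"
        using z by blast
      have "of_real (((x - t)\<^sup>2 + l1 * x + l2 * t) * laplace2 \<pi> x t)
              = (of_real ((x - t / 2) * laplace1 \<nu>1 t + (t - x / 2) * laplace1 \<nu>2 x) :: complex)"
        using BAR[OF x] t by simp
      then show ?thesis
        by (simp add: t claplace1_of_real claplace2_of_real)
    qed
  qed (use y in \<open>auto simp: open_halfspace_Re_gt convex_connected convex_halfspace_Re_gt\<close>)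
  then show ?thesis
    by simp
qed

lemma claplace1_cnj_symmetric_on_P2:
  assumes l1: "0 < l1" and l2: "0 < l2" and y: "y \<in> P2 l1 l2" and Re_y: "0 < Re y"
  shows "claplace1 \<nu>1 (cnj y) * Dpoly1 l1 l2 y = claplace1 \<nu>1 y * Dpoly1 l1 l2 (cnj y)"
proof (cases "Im y = 0")
  case True
  then have "cnj y = y"
    by (simp add: complex_eq_iff)
  then show ?thesis
    by simp
next
  case False
  define x where "x = Re y + l2 / 2"
  define X where "X = (of_real x :: complex)"
  define N where "N = (of_real (laplace1 \<nu>2 x) :: complex)"
  let ?L = "claplace1 \<nu>1" and ?D = "Dpoly1 l1 l2"
  have sum: "y + cnj y = 2 * X - of_real l2" and prod: "y * cnj y = X\<^sup>2 + of_real l1 * X"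
    using P2_cnj_sum_prod[OF y x_def] by (simp_all add: X_def)
  have x: "0 \<le> x"
    using Re_y l2 by (simp add: x_def)
  have "(X - y)\<^sup>2 + of_real l1 * X + of_real l2 * y = 0"
    using sum prod by algebra
  then have BAR_y: "(X - y / 2) * ?L y + (y - X / 2) * N = 0"
    using BAR_complex[OF x Re_y] by (simp add: X_def N_def)
  have "(X - cnj y)\<^sup>2 + of_real l1 * X + of_real l2 * cnj y = 0"
    using sum prod by algebra
  then have BAR_cnj_y: "(X - cnj y / 2) * ?L (cnj y) + (cnj y - X / 2) * N = 0"
    using BAR_complex[OF x, of "cnj y"] Re_y by (simp add: X_def N_def)
  have L_rel: "?L y * (X - y / 2) * (cnj y - X / 2) = ?L (cnj y) * (X - cnj y / 2) * (y - X / 2)"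
    using BAR_y BAR_cnj_y by algebra
  have D_rel: "?D y * (X - y / 2) * (cnj y - X / 2) = ?D (cnj y) * (X - cnj y / 2) * (y - X / 2)"
    using Dpoly1_kernel_roots[OF sum prod] .
  have "(?L (cnj y) * ?D y - ?L y * ?D (cnj y)) * (?D y * (X - y / 2) * (cnj y - X / 2)) = 0"
    using L_rel D_rel by algebra
  moreover have "?D y \<noteq> 0"
    using Dpoly1_nonzero_on_P2[OF l1 l2 y] .
  moreover have "X - y / 2 \<noteq> 0"
    using Re_y l2 by (auto simp: X_def x_def complex_eq_iff)
  moreover have "cnj y - X / 2 \<noteq> 0"
    using False by (auto simp: X_def complex_eq_iff)
  ultimately show ?thesis
    by simp
qed

end

theorem mainTheorem13:
  fixes l1 l2 :: real
    and \<pi> :: "(real \<times> real) measure"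
    and \<nu>1 \<nu>2 :: "real measure"
    and f :: "complex \<Rightarrow> complex"
    and S :: "complex set"
  assumes l1: "l1 > 0" and l2: "l2 > 0"
    and pi_prob: "prob_space \<pi>" and pi_sets: "sets \<pi> = sets borel"
    and pi_supp: "emeasure \<pi> ({0<..} \<times> {0<..}) = 1"
    and nu1_fin: "finite_measure \<nu>1" and nu1_sets: "sets \<nu>1 = sets borel"
    and nu1_supp: "emeasure \<nu>1 {..0} = 0"
    and nu2_fin: "finite_measure \<nu>2" and nu2_sets: "sets \<nu>2 = sets borel"
    and nu2_supp: "emeasure \<nu>2 {..0} = 0"
    and BAR: "\<And>x y. x \<ge> 0 \<Longrightarrow> y \<ge> 0 \<Longrightarrow>
       ((x - y)^2 + l1 * x + l2 * y) * laplace2 \<pi> x y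
         = (x - y / 2) * laplace1 \<nu>1 y + (y - x / 2) * laplace1 \<nu>2 x"
    and S_open: "open S" and S_sup: "D2 l1 l2 \<union> P2 l1 l2 \<subseteq> S"
    and f_holo: "f holomorphic_on S"
    and f_ext: "\<And>y. y \<in> D2 l1 l2 \<Longrightarrow> Re y > 0 \<Longrightarrow> f y = claplace1 \<nu>1 y"
  shows "\<forall>y \<in> P2 l1 l2. f (cnj y) / Dpoly1 l1 l2 (cnj y) = f y / Dpoly1 l1 l2 y"
proof -
  have nu1_nonneg: "AE u in \<nu>1. 0 \<le> u"
    using nu1_sets nu1_supp by (rule AE_nonneg_if_emeasure_nonpos_zero)
  interpret basic_adjoint_relationship l1 l2 \<pi> \<nu>1 \<nu>2
    using AE_quadrant_if_emeasure_open_quadrant_one[OF pi_prob pi_supp]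
    by (intro basic_adjoint_relationship.intro prob_space.finite_measure[OF pi_prob] pi_sets
        nu1_fin nu1_sets nu1_nonneg BAR)
  have f_eq: "f y = claplace1 \<nu>1 y" if "y \<in> P2 l1 l2" "0 < Re y" for y
    using eq_on_P2_if_eq_on_D2[OF _ S_open _ f_holo claplace1_holomorphic[OF nu1_fin nu1_sets nu1_nonneg]
        f_ext that] l1 l2 S_sup by auto
  have "f (cnj y) * Dpoly1 l1 l2 y = f y * Dpoly1 l1 l2 (cnj y)" if "y \<in> P2 l1 l2" for y
  proof (rule P2_cnj_symmetry_continuation[OF l1 l2 S_open _ f_holo _ _ that])
    show "Dpoly1 l1 l2 holomorphic_on S"
      unfolding Dpoly1_def[abs_def] by (intro holomorphic_intros)
    show "f (cnj y) * Dpoly1 l1 l2 y = f y * Dpoly1 l1 l2 (cnj y)" if "y \<in> P2 l1 l2" "0 < Re y" for y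
      using that f_eq[of y] f_eq[of "cnj y"] cnj_in_P2 claplace1_cnj_symmetric_on_P2[OF l1 l2] by simp
  qed (use S_sup in blast)
  then show ?thesis
    using cnj_in_P2 Dpoly1_nonzero_on_P2[OF l1 l2] by (simp add: frac_eq_eq mult.commute)
qed

end
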